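(* Let $(\rho,\sigma)\in\mathfrak V$ with $\sigma\le0$ and $\rho\mid l$, and let $\lambda\in K$. Let $\varphi$ be the automorphism of $W^{(l)}$ with $\varphi(X^{1/l})=X^{1/l}$ and $\varphi(Y)=Y+\lambda X^{\sigma/\rho}$, and let $\varphi_L$ be the automorphism of $L^{(l)}$ with $\varphi_L(x^{1/l})=x^{1/l}$, $\varphi_L(y)=y+\lambda x^{\sigma/\rho}$. Then for all $P\in W^{(l)}\setminus\{0\}$: $\ell_{\rho,\sigma}(\varphi(P))=\varphi_L(\ell_{\rho,\sigma}(P))$ and $v_{\rho,\sigma}(\varphi(P))=v_{\rho,\sigma}(P)$. Furthermore, $\ell_{\rho_1,\sigma_1}(\varphi(P))=\ell_{\rho_1,\sigma_1}(P)$ for all $(\rho_1,\sigma_1)\in\mathfrak V$ with $(\rho,\sigma)<(\rho_1,\sigma_1)<(-1,1)$.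
   Context: $K$ is a field of characteristic zero, $l\in\mathbb{N}$. $W^{(l)}$ is the associative $K$-algebra with $K$-basis $\{X^{i/l}Y^j:i\in\mathbb{Z},j\in\mathbb{N}_0\}$, powers of $X$ multiplying as Laurent monomials and $[Y,X^\alpha]=\alpha X^{\alpha-1}$ for $\alpha\in\frac1l\mathbb{Z}$. $L^{(l)}=K[x^{\pm1/l},y]$, $\Psi^{(l)}(X^{i/l}Y^j)=x^{i/l}y^j$ ($K$-linear); supports are sets of exponents with nonzero coefficient. $\mathfrak V=\{(\rho,\sigma)\in\mathbb{Z}^2:\gcd(\rho,\sigma)=1,\rho+\sigma>0\}$. For $P\ne0$, $v_{\rho,\sigma}(P)=\max\{\rho a+\sigma b:(a,b)\in\mathrm{Supp}(P)\}$, $\ell_{\rho,\sigma}(P)\in L^{(l)}$ = sum of terms of $\Psi^{(l)}(P)$ attaining it. Order: $(\rho,\sigma)<(-1,1)$ for all $(\rho,\sigma)\in\mathfrak V$, and on $\mathfrak V$, $(\rho_1,\sigma_1)\le(\rho,\sigma)$ iff $\rho_1\sigma-\sigma_1\rho\ge0$. *)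

theory Defs
  imports Complex_Main "HOL-Library.Poly_Mapping" "HOL-Library.Product_Plus"
begin

text \<open>Both W^(l) and L^(l) are represented on the same carrier: finitely supported
  coefficient maps (int x nat) =>0 a, where the key (i,j) stands for the basis element
  X^(i/l) Y^j of W^(l), resp. the monomial x^(i/l) y^j of L^(l).  Hence the map Psi^(l)
  is the identity on this carrier.  The commutative multiplication of L^(l) is the
  Poly_Mapping convolution product; the Weyl multiplication of W^(l) is wmult below.\<close>

type_synonym 'a wl = "(int \<times> nat) \<Rightarrow>\<^sub>0 'a"

text \<open>Product of basis elements: (X^(a/l) Y^j)(X^(b/l) Y^k)
  = sum over t \<le> j of binom(j,t) (b/l)(b/l-1)...(b/l-t+1) X^((a+b-t l)/l) Y^(j+k-t),
  which follows from [Y, X^alpha] = alpha X^(alpha-1).\<close>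
definition wmono :: "nat \<Rightarrow> int \<times> nat \<Rightarrow> int \<times> nat \<Rightarrow> 'a::field_char_0 wl" where
  "wmono l p q = (case p of (a, j) \<Rightarrow> case q of (b, k) \<Rightarrow>
     (\<Sum>t\<in>{0..j}. Poly_Mapping.single (a + b - int t * int l, j + k - t)
        (of_nat (j choose t) * (\<Prod>s<t. (of_int b / of_nat l - of_nat s)))))"

definition wscale :: "'a::field_char_0 \<Rightarrow> 'a wl \<Rightarrow> 'a wl" where
  "wscale c P = Poly_Mapping.map ((*) c) P"

definition wmult :: "nat \<Rightarrow> 'a::field_char_0 wl \<Rightarrow> 'a wl \<Rightarrow> 'a wl" where
  "wmult l P Q = (\<Sum>p\<in>Poly_Mapping.keys P. \<Sum>q\<in>Poly_Mapping.keys Q.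
      wscale (Poly_Mapping.lookup P p * Poly_Mapping.lookup Q q) (wmono l p q))"

definition wt :: "nat \<Rightarrow> int \<Rightarrow> int \<Rightarrow> int \<times> nat \<Rightarrow> rat" where
  "wt l \<rho> \<sigma> k = of_int \<rho> * of_int (fst k) / of_nat l + of_int \<sigma> * of_nat (snd k)"

definition vval :: "nat \<Rightarrow> int \<Rightarrow> int \<Rightarrow> 'a::zero wl \<Rightarrow> rat" where
  "vval l \<rho> \<sigma> P = Max (wt l \<rho> \<sigma> ` Poly_Mapping.keys P)"

definition ell :: "nat \<Rightarrow> int \<Rightarrow> int \<Rightarrow> 'a::comm_monoid_add wl \<Rightarrow> 'a wl" where
  "ell l \<rho> \<sigma> P = (\<Sum>k\<in>{k\<in>Poly_Mapping.keys P. wt l \<rho> \<sigma> k = vval l \<rho> \<sigma> P}.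
                      Poly_Mapping.single k (Poly_Mapping.lookup P k))"

definition VV :: "(int \<times> int) set" where
  "VV = {(\<rho>, \<sigma>). gcd \<rho> \<sigma> = 1 \<and> \<rho> + \<sigma> > 0}"

definition vle :: "int \<times> int \<Rightarrow> int \<times> int \<Rightarrow> bool" where
  "vle a b = (fst a * snd b - snd a * fst b \<ge> 0)"

text \<open>Strict order on VV extended by the convention that every element of VV is
  smaller than (-1,1).\<close>
definition vless :: "int \<times> int \<Rightarrow> int \<times> int \<Rightarrow> bool" where
  "vless a b = (a \<in> VV \<and> ((b = (-1, 1)) \<or> (b \<in> VV \<and> vle a b \<and> a \<noteq> b)))"

end

theory Submission
  imports Defs
begin

text \<open>Put Z = Y + \<lambda>X^(\<sigma>/\<rho>). The monomial X^(\<sigma>/\<rho>) has (\<rho>,\<sigma>)-weight \<sigma>, the weight of Y,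
  so Z is (\<rho>,\<sigma>)-homogeneous of weight \<sigma>. Both automorphisms fix every power of X, hence
  \<phi>(X^i Y^j) = X^i Z^{*j} with the power taken in W, and \<phi>L(X^i Y^j) = X^i Z^j.
  Reordering a Weyl product into normal form produces only correction terms of weight lower
  by a positive multiple of \<rho> + \<sigma>, so Z^{*j} - Z^j has weight below j\<sigma>. Hence
  \<phi>(P) = \<phi>L(ell(P)) + lower terms, where \<phi>L(ell(P)) is homogeneous and nonzero, which gives both claims.
  For (\<rho>1,\<sigma>1) strictly between (\<rho>,\<sigma>) and (-1,1) the monomial X^(\<sigma>/\<rho>) has (\<rho>1,\<sigma>1)-weight
  \<rho>1\<sigma>/\<rho> < \<sigma>1, so Z is Y plus lower terms and \<phi>(P) = P + lower terms.\<close>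

section \<open>Weighted supports\<close>

abbreviation mon :: "int \<times> nat \<Rightarrow> 'a::{zero,one} wl" where
  "mon k \<equiv> Poly_Mapping.single k 1"

lemma wt_add: "wt l r s (p + q) = wt l r s p + wt l r s q"
  by (cases p, cases q) (simp add: wt_def algebra_simps add_divide_distrib)

lemma wt_zero [simp]: "wt l r s 0 = 0"
  by (simp add: wt_def zero_prod_def)

lemma mon_zero [simp]: "mon (0, 0) = 1"
  by (simp add: zero_prod_def[symmetric])

lemma sum_single_lookup: "(\<Sum>k\<in>Poly_Mapping.keys P. Poly_Mapping.single k (Poly_Mapping.lookup P k)) = P"
  by (rule poly_mapping_eqI) (auto simp: lookup_sum lookup_single when_def in_keys_iff)

lemma wscale_eq_mult: "wscale c P = Poly_Mapping.single 0 c * P"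
  by (simp add: wscale_def mult_map_scale_conv_mult)

lemma wscale_zero [simp]: "wscale c 0 = 0"
  by (simp add: wscale_eq_mult)

lemma wscale_add: "wscale c (P + Q) = wscale c P + wscale c Q"
  by (simp add: wscale_eq_mult distrib_left)

lemma wscale_diff: "wscale c (P - Q) = wscale c P - wscale c (Q :: 'a::field_char_0 wl)"
  by (simp add: wscale_eq_mult right_diff_distrib)

lemma wscale_single: "wscale c (mon k) = Poly_Mapping.single k c"
  by (simp add: wscale_eq_mult mult_single)

lemma keys_wscale: "Poly_Mapping.keys (wscale c P) \<subseteq> Poly_Mapping.keys P"
  unfolding wscale_def by transfer (auto simp: when_def)

definition weights_in :: "nat \<Rightarrow> int \<Rightarrow> int \<Rightarrow> rat set \<Rightarrow> 'a::zero wl \<Rightarrow> bool" where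
  "weights_in l r s A P \<longleftrightarrow> wt l r s ` Poly_Mapping.keys P \<subseteq> A"

lemma weights_in_mono: "weights_in l r s A P \<Longrightarrow> A \<subseteq> B \<Longrightarrow> weights_in l r s B P"
  by (auto simp: weights_in_def)

lemma weights_in_zero [simp]: "weights_in l r s A 0"
  by (simp add: weights_in_def)

lemma weights_in_single: "wt l r s k \<in> A \<Longrightarrow> weights_in l r s A (Poly_Mapping.single k c)"
  by (simp add: weights_in_def)

lemma weights_in_add:
  "weights_in l r s A P \<Longrightarrow> weights_in l r s A Q \<Longrightarrow> weights_in l r s A (P + Q)"
  using keys_add[of P Q] unfolding weights_in_def by blast

lemma weights_in_sum:
  "(\<And>i. i \<in> I \<Longrightarrow> weights_in l r s A (f i)) \<Longrightarrow> weights_in l r s A (sum f I)"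
  using keys_sum[of f I] unfolding weights_in_def by blast

lemma weights_in_wscale: "weights_in l r s A P \<Longrightarrow> weights_in l r s A (wscale c P)"
  using keys_wscale[of c P] unfolding weights_in_def by blast

lemma weights_in_mult:
  assumes "weights_in l r s A P" "weights_in l r s B Q"
    and "\<And>a b. a \<in> A \<Longrightarrow> b \<in> B \<Longrightarrow> a + b \<in> C"
  shows "weights_in l r s C (P * Q :: 'a::semiring_0 wl)"
proof -
  have "wt l r s (p + q) \<in> C" if "p \<in> Poly_Mapping.keys P" "q \<in> Poly_Mapping.keys Q" for p q
    using assms that by (auto simp: weights_in_def wt_add)
  then show ?thesis
    using keys_mult[of P Q] unfolding weights_in_def by blast
qed

lemma weights_in_power_atMost:
  "weights_in l r s {..c} Z \<Longrightarrow> weights_in l r s {..of_nat j * c} (Z ^ j :: 'a::comm_semiring_1 wl)"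
proof (induction j)
  case (Suc j)
  have "weights_in l r s {..c + of_nat j * c} (Z ^ Suc j)"
    unfolding power_Suc
    by (rule weights_in_mult[OF Suc.prems Suc.IH[OF Suc.prems]]) (auto intro: add_mono)
  then show ?case
    by (rule weights_in_mono) (simp add: algebra_simps)
qed (simp add: weights_in_def)

lemma weights_in_power_singleton:
  "weights_in l r s {c} Z \<Longrightarrow> weights_in l r s {of_nat j * c} (Z ^ j :: 'a::comm_semiring_1 wl)"
proof (induction j)
  case (Suc j)
  have "weights_in l r s {c + of_nat j * c} (Z ^ Suc j)"
    unfolding power_Suc
    by (rule weights_in_mult[OF Suc.prems Suc.IH[OF Suc.prems]]) auto
  then show ?case
    by (rule weights_in_mono) (simp add: algebra_simps)
qed (simp add: weights_in_def)

lemma weights_in_power_minus_power: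
  fixes Y Z :: "'a::comm_ring_1 wl"
  assumes Y: "weights_in l r s {..c} Y" and ZY: "weights_in l r s {..<c} (Z - Y)"
  shows "weights_in l r s {..<of_nat j * c} (Z ^ j - Y ^ j)"
proof -
  have "weights_in l r s {..c} (Y + (Z - Y))"
    by (intro weights_in_add Y weights_in_mono[OF ZY]) auto
  then have Z: "weights_in l r s {..c} Z"
    by simp
  show ?thesis
  proof (induction j)
    case (Suc j)
    have "Z ^ Suc j - Y ^ Suc j = (Z - Y) * Z ^ j + Y * (Z ^ j - Y ^ j)"
      by (simp add: algebra_simps)
    also have "weights_in l r s {..<c + of_nat j * c} \<dots>"
    proof (rule weights_in_add)
      show "weights_in l r s {..<c + of_nat j * c} ((Z - Y) * Z ^ j)"
        by (rule weights_in_mult[OF ZY weights_in_power_atMost[OF Z]]) (auto intro: add_less_le_mono)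
      show "weights_in l r s {..<c + of_nat j * c} (Y * (Z ^ j - Y ^ j))"
        by (rule weights_in_mult[OF Y Suc.IH]) (auto intro: add_le_less_mono)
    qed
    finally show ?case
      by (rule weights_in_mono) (simp add: algebra_simps)
  qed simp
qed

section \<open>The Weyl product as a perturbed commutative product\<close>

definition wmono_tail :: "nat \<Rightarrow> int \<times> nat \<Rightarrow> int \<times> nat \<Rightarrow> 'a::field_char_0 wl" where
  "wmono_tail l p q = (case p of (a, j) \<Rightarrow> case q of (b, k) \<Rightarrow>
     (\<Sum>t\<in>{1..j}. Poly_Mapping.single (a + b - int t * int l, j + k - t)
        (of_nat (j choose t) * (\<Prod>s<t. (of_int b / of_nat l - of_nat s)))))"

lemma wmono_eq_mon_add_tail: "wmono l p q = mon (p + q) + wmono_tail l p q"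
proof -
  obtain a j b k where p: "p = (a, j)" and q: "q = (b, k)"
    by (cases p, cases q) auto
  have "{0..j} = insert 0 {1..j}"
    by auto
  then show ?thesis
    unfolding p q wmono_def wmono_tail_def by simp
qed

lemma wmono_tail_X_left: "wmono_tail l (m, 0) q = 0"
  by (cases q) (simp add: wmono_tail_def)

lemma wmono_tail_Y_right: "wmono_tail l p (0, k) = 0"
proof -
  have vanish: "(\<Prod>s<t. - of_nat s) = (0::'a)" if "Suc 0 \<le> t" for t
    using that by (intro prod_zero) (auto intro!: bexI[of _ 0])
  show ?thesis
    by (cases p) (simp add: wmono_tail_def vanish)
qed

text \<open>The t-th correction term lowers the exponents of both X and Y by t, hence the
  weight by t(r + s).\<close>
lemma weights_wmono_tail:
  assumes "l > 0" and "r + s > 0"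
  shows "weights_in l r s {..<wt l r s p + wt l r s q} (wmono_tail l p q :: 'a::field_char_0 wl)"
proof -
  obtain a j b k where p: "p = (a, j)" and q: "q = (b, k)"
    by (cases p, cases q) auto
  have drop: "wt l r s (a + b - int t * int l, j + k - t) < wt l r s (a, j) + wt l r s (b, k)"
    if "t \<in> {1..j}" for t
  proof -
    have "wt l r s (a + b - int t * int l, j + k - t) = wt l r s (a, j) + wt l r s (b, k) - of_nat t * of_int (r + s)"
      using that assms(1) unfolding wt_def
      by (simp add: algebra_simps add_divide_distrib diff_divide_distrib)
    moreover have "of_nat t * of_int (r + s) > (0 :: rat)"
      using that assms(2) by simp
    ultimately show ?thesis
      by simp
  qed
  show ?thesis
    unfolding wmono_tail_def p q prod.case
    by (intro weights_in_sum weights_in_single) (simp add: drop)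
qed

lemma mult_eq_sum_mon:
  "P * Q = (\<Sum>p\<in>Poly_Mapping.keys P. \<Sum>q\<in>Poly_Mapping.keys Q.
      wscale (Poly_Mapping.lookup P p * Poly_Mapping.lookup Q q) (mon (p + q)))"
proof -
  have "P * Q = (\<Sum>p\<in>Poly_Mapping.keys P. Poly_Mapping.single p (Poly_Mapping.lookup P p)) *
      (\<Sum>q\<in>Poly_Mapping.keys Q. Poly_Mapping.single q (Poly_Mapping.lookup Q q))"
    by (simp only: sum_single_lookup)
  then show ?thesis
    by (simp add: sum_product wscale_single mult_single)
qed

lemma wmult_eq_mult_add_tail:
  "wmult l P Q = P * Q + (\<Sum>p\<in>Poly_Mapping.keys P. \<Sum>q\<in>Poly_Mapping.keys Q.
      wscale (Poly_Mapping.lookup P p * Poly_Mapping.lookup Q q) (wmono_tail l p q))"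
  unfolding wmult_def mult_eq_sum_mon wmono_eq_mon_add_tail wscale_add by (simp add: sum.distrib)

lemma wmult_X_left: "wmult l (mon (m, 0)) Q = mon (m, 0) * Q"
  by (simp add: wmult_eq_mult_add_tail wmono_tail_X_left)

lemma wmult_Y_right: "wmult l P (mon (0, k)) = P * mon (0, k)"
  by (simp add: wmult_eq_mult_add_tail wmono_tail_Y_right)

lemma weights_wmult_minus_mult:
  assumes "weights_in l r s {..c} P" "weights_in l r s {..d} Q" "l > 0" "r + s > 0"
  shows "weights_in l r s {..<c + d} (wmult l P Q - P * Q :: 'a::field_char_0 wl)"
proof -
  have "weights_in l r s {..<c + d} (wmono_tail l p q :: 'a wl)"
    if "p \<in> Poly_Mapping.keys P" "q \<in> Poly_Mapping.keys Q" for p q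
  proof (rule weights_in_mono[OF weights_wmono_tail[OF assms(3,4)]])
    have "wt l r s p \<in> {..c}" "wt l r s q \<in> {..d}"
      using that assms(1,2) unfolding weights_in_def by blast+
    then show "{..<wt l r s p + wt l r s q} \<subseteq> {..<c + d}"
      by (auto intro: add_mono)
  qed
  then show ?thesis
    by (auto simp: wmult_eq_mult_add_tail intro!: weights_in_sum weights_in_wscale)
qed

definition wpow :: "nat \<Rightarrow> 'a::field_char_0 wl \<Rightarrow> nat \<Rightarrow> 'a wl" where
  "wpow l Z j = (wmult l Z ^^ j) 1"

lemma wpow_0 [simp]: "wpow l Z 0 = 1"
  by (simp add: wpow_def)

lemma wpow_Suc: "wpow l Z (Suc j) = wmult l Z (wpow l Z j)"
  by (simp add: wpow_def)

lemma mon_Y_power: "mon (0, j) = (mon (0, 1) ^ j :: 'a::comm_semiring_1 wl)"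
proof (induction j)
  case (Suc j)
  have "mon (0, Suc j) = (mon (0, 1) * mon (0, j) :: 'a wl)"
    by (simp add: mult_single)
  then show ?case
    using Suc.IH by simp
qed simp

lemma wpow_Y: "wpow l (mon (0, 1)) j = mon (0, j)"
  by (induction j) (simp_all add: wpow_Suc wmult_Y_right mult_single)

lemma weights_wpow_minus_power:
  fixes Z :: "'a::field_char_0 wl"
  assumes Z: "weights_in l r s {..c} Z" and "l > 0" "r + s > 0"
  shows "weights_in l r s {..<of_nat j * c} (wpow l Z j - Z ^ j)"
proof (induction j)
  case (Suc j)
  have "weights_in l r s {..of_nat j * c} (Z ^ j + (wpow l Z j - Z ^ j))"
    by (intro weights_in_add weights_in_power_atMost[OF Z] weights_in_mono[OF Suc.IH]) auto
  then have W: "weights_in l r s {..of_nat j * c} (wpow l Z j)"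
    by simp
  have "wpow l Z (Suc j) - Z ^ Suc j = (wmult l Z (wpow l Z j) - Z * wpow l Z j) + Z * (wpow l Z j - Z ^ j)"
    by (simp add: wpow_Suc algebra_simps)
  also have "weights_in l r s {..<c + of_nat j * c} \<dots>"
    by (intro weights_in_add weights_wmult_minus_mult[OF Z W assms(2,3)]
        weights_in_mult[OF Z Suc.IH]) (auto simp: add_le_less_mono)
  finally show ?case
    by (simp add: algebra_simps)
qed simp

section \<open>Leading forms under perturbation by lower terms\<close>

lemma wt_le_vval: "k \<in> Poly_Mapping.keys P \<Longrightarrow> wt l r s k \<le> vval l r s P"
  unfolding vval_def by (intro Max_ge) auto

lemma vval_mem_wt_keys: "P \<noteq> 0 \<Longrightarrow> vval l r s P \<in> wt l r s ` Poly_Mapping.keys P"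
  unfolding vval_def by (intro Max_in) auto

lemma lookup_ell:
  "Poly_Mapping.lookup (ell l r s P) k =
     (if wt l r s k = vval l r s P then Poly_Mapping.lookup P k else 0)"
  by (auto simp: ell_def lookup_sum lookup_single when_def in_keys_iff)

lemma ell_nonzero: "P \<noteq> 0 \<Longrightarrow> ell l r s P \<noteq> 0"
  by (metis (no_types, lifting) imageE in_keys_iff lookup_ell lookup_zero vval_mem_wt_keys)

lemma weights_in_ell: "weights_in l r s {vval l r s P} (ell l r s P)"
  by (auto simp: weights_in_def in_keys_iff lookup_ell split: if_splits)

lemma weights_in_minus_ell: "weights_in l r s {..<vval l r s P} (P - ell l r s P)"
proof -
  have "wt l r s k < vval l r s P" if "k \<in> Poly_Mapping.keys (P - ell l r s P)" for k
  proof -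
    have "k \<in> Poly_Mapping.keys P" "wt l r s k \<noteq> vval l r s P"
      using that by (auto simp: in_keys_iff lookup_minus lookup_ell split: if_splits)
    then show ?thesis
      using wt_le_vval[of k P l r s] by simp
  qed
  then show ?thesis
    unfolding weights_in_def by blast
qed

lemma vval_ell_add_lower:
  assumes "H \<noteq> 0" and H: "weights_in l r s {c} H" and D: "weights_in l r s {..<c} D"
  shows "vval l r s (H + D) = c \<and> ell l r s (H + D) = H"
proof -
  have wt_H: "wt l r s k = c" if "k \<in> Poly_Mapping.keys H" for k
    using H that unfolding weights_in_def by blast
  have lookup_D: "Poly_Mapping.lookup D k = 0" if "wt l r s k = c" for k
    using D that unfolding weights_in_def by (metis image_subset_iff in_keys_iff lessThan_iff less_irrefl)
  obtain k0 where k0: "k0 \<in> Poly_Mapping.keys H"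
    using \<open>H \<noteq> 0\<close> by (metis all_not_in_conv keys_eq_empty)
  have "k0 \<in> Poly_Mapping.keys (H + D)"
    using k0 lookup_D[OF wt_H[OF k0]] by (simp add: in_keys_iff lookup_add)
  moreover have "wt l r s k \<le> c" if "k \<in> Poly_Mapping.keys (H + D)" for k
    using that keys_add[of H D] wt_H D unfolding weights_in_def by fastforce
  ultimately have v: "vval l r s (H + D) = c"
    unfolding vval_def using wt_H[OF k0] by (intro Max_eqI) auto
  have "ell l r s (H + D) = H"
  proof (rule poly_mapping_eqI)
    fix k
    show "Poly_Mapping.lookup (ell l r s (H + D)) k = Poly_Mapping.lookup H k"
      using wt_H[of k] lookup_D[of k] by (auto simp: lookup_ell v lookup_add in_keys_iff)
  qed
  with v show ?thesis
    by simp
qed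

lemma weights_in_image:
  assumes "additive h" and h_scale: "\<And>c P. h (wscale c P) = wscale c (h P)"
    and h_mon: "\<And>k. k \<in> Poly_Mapping.keys Q \<Longrightarrow> weights_in l r s A (h (mon k))"
  shows "weights_in l r s A (h Q)"
proof -
  have "h Q = h (\<Sum>k\<in>Poly_Mapping.keys Q. wscale (Poly_Mapping.lookup Q k) (mon k))"
    by (simp add: wscale_single sum_single_lookup)
  also have "\<dots> = (\<Sum>k\<in>Poly_Mapping.keys Q. wscale (Poly_Mapping.lookup Q k) (h (mon k)))"
    by (simp add: additive.sum[OF \<open>additive h\<close>] h_scale)
  finally show ?thesis
    by (auto intro!: weights_in_sum weights_in_wscale h_mon)
qed

lemma ell_vval_lower_perturbation:
  fixes f g :: "'a::field_char_0 wl \<Rightarrow> 'a wl"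
  assumes f: "additive f" and f_scale: "\<And>c P. f (wscale c P) = wscale c (f P)"
    and g: "additive g" and g_scale: "\<And>c P. g (wscale c P) = wscale c (g P)"
    and "inj g"
    and lower: "\<And>k. weights_in l r s {..<wt l r s k} (f (mon k) - g (mon k))"
    and homogeneous: "\<And>k. weights_in l r s {wt l r s k} (g (mon k))"
    and "P \<noteq> 0"
  shows "ell l r s (f P) = g (ell l r s P) \<and> vval l r s (f P) = vval l r s P"
proof -
  let ?v = "vval l r s P"
  have fg_additive: "additive (\<lambda>Q. f Q - g Q)"
    by (rule additive.intro) (simp add: additive.add[OF f] additive.add[OF g])
  have fg_scale: "f (wscale c Q) - g (wscale c Q) = wscale c (f Q - g Q)" for c Q
    by (simp only: f_scale g_scale wscale_diff)
  have fg: "weights_in l r s {..<?v} (f P - g P)"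
  proof (rule weights_in_image[where h = "\<lambda>Q. f Q - g Q", OF fg_additive fg_scale])
    fix k
    assume "k \<in> Poly_Mapping.keys P"
    then have "{..<wt l r s k} \<subseteq> {..<?v}"
      using wt_le_vval[of k P l r s] by auto
    then show "weights_in l r s {..<?v} (f (mon k) - g (mon k))"
      by (rule weights_in_mono[OF lower])
  qed
  have tail: "weights_in l r s {..<?v} (g (P - ell l r s P))"
  proof (rule weights_in_image[OF g g_scale])
    fix k
    assume "k \<in> Poly_Mapping.keys (P - ell l r s P)"
    then have "{wt l r s k} \<subseteq> {..<?v}"
      using weights_in_minus_ell[of l r s P] unfolding weights_in_def by blast
    then show "weights_in l r s {..<?v} (g (mon k))"
      by (rule weights_in_mono[OF homogeneous])
  qed
  have head: "weights_in l r s {?v} (g (ell l r s P))"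
  proof (rule weights_in_image[OF g g_scale])
    fix k
    assume "k \<in> Poly_Mapping.keys (ell l r s P)"
    then have "{wt l r s k} \<subseteq> {?v}"
      using weights_in_ell[of l r s P] unfolding weights_in_def by blast
    then show "weights_in l r s {?v} (g (mon k))"
      by (rule weights_in_mono[OF homogeneous])
  qed
  have "g (ell l r s P) \<noteq> 0"
    using ell_nonzero[OF \<open>P \<noteq> 0\<close>] \<open>inj g\<close> additive.zero[OF g] by (metis injD)
  note leading = vval_ell_add_lower[OF this head weights_in_add[OF fg tail]]
  have "g (P - ell l r s P) = g P - g (ell l r s P)"
    by (rule additive.diff[OF g])
  then have "g (ell l r s P) + ((f P - g P) + g (P - ell l r s P)) = f P"
    by simp
  with leading show ?thesis
    by simp
qed

section \<open>The substitution automorphisms\<close>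

lemma hom_fixes_mon_X:
  fixes M :: "'a::field_char_0 wl \<Rightarrow> 'a wl \<Rightarrow> 'a wl" and f :: "'a wl \<Rightarrow> 'a wl"
  assumes M_X: "\<And>m Q. M (mon (m, 0)) Q = mon (m, 0) * Q"
    and hom: "\<And>P Q. f (M P Q) = M (f P) (f Q)" and "f 1 = 1"
    and f_X: "f (mon (1, 0)) = mon (1, 0)"
  shows "f (mon (i, 0)) = mon (i, 0)"
proof -
  have mon_X_add: "mon (m + n, 0) = M (mon (m, 0)) (mon (n, 0))" for m n
    by (simp add: M_X mult_single)
  have nat_case: "f (mon (int n, 0)) = mon (int n, 0)" for n
  proof (induction n)
    case (Suc n)
    then show ?case
      using mon_X_add[of 1 "int n"] by (simp add: hom f_X add.commute)
  qed (simp add: \<open>f 1 = 1\<close>)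
  show ?thesis
  proof (cases "i \<ge> 0")
    case True
    then show ?thesis
      using nat_case[of "nat i"] by simp
  next
    case False
    define n where "n = nat (- i)"
    then have i: "i = - int n"
      using False by simp
    have "mon (int n, 0) * f (mon (- int n, 0)) = 1"
      using hom[of "mon (int n, 0)" "mon (- int n, 0)"] nat_case[of n] \<open>f 1 = 1\<close>
      by (simp add: M_X mult_single)
    then have "f (mon (- int n, 0)) = (mon (- int n, 0) * mon (int n, 0)) * f (mon (- int n, 0))"
      by (simp add: mult_single)
    also have "\<dots> = mon (- int n, 0)"
      by (simp only: mult.assoc \<open>mon (int n, 0) * f (mon (- int n, 0)) = 1\<close> mult_1_right)
    finally show ?thesis
      by (simp add: i)
  qed
qed

lemma wmult_hom_image_mon:
  fixes \<phi> :: "'a::field_char_0 wl \<Rightarrow> 'a wl"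
  assumes hom: "\<And>P Q. \<phi> (wmult l P Q) = wmult l (\<phi> P) (\<phi> Q)" and "\<phi> 1 = 1"
    and "\<phi> (mon (1, 0)) = mon (1, 0)"
  shows "\<phi> (mon (i, j)) = mon (i, 0) * wpow l (\<phi> (mon (0, 1))) j"
proof -
  have wpow_hom: "\<phi> (wpow l Z n) = wpow l (\<phi> Z) n" for Z n
    by (induction n) (simp_all add: wpow_Suc hom \<open>\<phi> 1 = 1\<close>)
  have "\<phi> (mon (i, j)) = \<phi> (wmult l (mon (i, 0)) (wpow l (mon (0, 1)) j))"
    unfolding wpow_Y wmult_X_left by (simp add: mult_single)
  also have "\<dots> = wmult l (\<phi> (mon (i, 0))) (wpow l (\<phi> (mon (0, 1))) j)"
    by (simp only: hom wpow_hom)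
  also have "\<phi> (mon (i, 0)) = mon (i, 0)"
    by (rule hom_fixes_mon_X[OF wmult_X_left hom assms(2,3)])
  finally show ?thesis
    by (simp only: wmult_X_left)
qed

lemma mult_hom_image_mon:
  fixes \<phi> :: "'a::field_char_0 wl \<Rightarrow> 'a wl"
  assumes hom: "\<And>P Q. \<phi> (P * Q) = \<phi> P * \<phi> Q" and "\<phi> 1 = 1"
    and "\<phi> (mon (1, 0)) = mon (1, 0)"
  shows "\<phi> (mon (i, j)) = mon (i, 0) * \<phi> (mon (0, 1)) ^ j"
proof -
  have power_hom: "\<phi> (Z ^ n) = \<phi> Z ^ n" for Z n
    by (induction n) (simp_all add: hom \<open>\<phi> 1 = 1\<close>)
  have "\<phi> (mon (i, j)) = \<phi> (mon (i, 0) * mon (0, 1) ^ j)"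
    unfolding mon_Y_power[symmetric] by (simp add: mult_single)
  also have "\<dots> = \<phi> (mon (i, 0)) * \<phi> (mon (0, 1)) ^ j"
    by (simp only: hom power_hom)
  also have "\<phi> (mon (i, 0)) = mon (i, 0)"
    by (rule hom_fixes_mon_X[where M = "(*)", OF refl hom assms(2,3)])
  finally show ?thesis .
qed

lemma wt_split: "wt l r s (i, j) = wt l r s (i, 0) + of_nat j * of_int s"
  by (simp add: wt_def)

lemma ell_vval_wpow_substitution:
  fixes \<phi> g :: "'a::field_char_0 wl \<Rightarrow> 'a wl"
  assumes "l > 0" "r + s > 0" and Z: "weights_in l r s {of_int s} Z"
    and "additive \<phi>" "\<And>c P. \<phi> (wscale c P) = wscale c (\<phi> P)"
    and \<phi>_mon: "\<And>i j. \<phi> (mon (i, j)) = mon (i, 0) * wpow l Z j"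
    and "additive g" "\<And>c P. g (wscale c P) = wscale c (g P)" "inj g"
    and g_mon: "\<And>i j. g (mon (i, j)) = mon (i, 0) * Z ^ j"
    and "P \<noteq> 0"
  shows "ell l r s (\<phi> P) = g (ell l r s P) \<and> vval l r s (\<phi> P) = vval l r s P"
proof (rule ell_vval_lower_perturbation[OF assms(4,5,7,8,9) _ _ \<open>P \<noteq> 0\<close>])
  fix k :: "int \<times> nat"
  obtain i j where k: "k = (i, j)"
    by (cases k)
  have X: "weights_in l r s {wt l r s (i, 0)} (mon (i, 0) :: 'a wl)"
    by (simp add: weights_in_single)
  have "weights_in l r s {..of_int s} Z"
    by (rule weights_in_mono[OF Z]) simp
  from weights_wpow_minus_power[OF this \<open>l > 0\<close> \<open>r + s > 0\<close>]
  show "weights_in l r s {..<wt l r s k} (\<phi> (mon k) - g (mon k))"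
    unfolding k \<phi>_mon g_mon right_diff_distrib[symmetric] wt_split[of l r s i j]
    by (rule weights_in_mult[OF X]) simp
  show "weights_in l r s {wt l r s k} (g (mon k))"
    unfolding k g_mon wt_split[of l r s i j]
    by (rule weights_in_mult[OF X weights_in_power_singleton[OF Z]]) simp
qed

lemma ell_wpow_substitution_lower:
  fixes \<phi> :: "'a::field_char_0 wl \<Rightarrow> 'a wl"
  assumes "l > 0" "r + s > 0" and ZY: "weights_in l r s {..<of_int s} (Z - mon (0, 1))"
    and "additive \<phi>" "\<And>c P. \<phi> (wscale c P) = wscale c (\<phi> P)"
    and \<phi>_mon: "\<And>i j. \<phi> (mon (i, j)) = mon (i, 0) * wpow l Z j"
    and "P \<noteq> 0"
  shows "ell l r s (\<phi> P) = ell l r s P"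
proof -
  have Y: "weights_in l r s {..of_int s} (mon (0, 1) :: 'a wl)"
    by (simp add: weights_in_single wt_def)
  have "weights_in l r s {..of_int s} (mon (0, 1) + (Z - mon (0, 1)))"
    by (intro weights_in_add Y weights_in_mono[OF ZY]) auto
  then have Z: "weights_in l r s {..of_int s} Z"
    by simp
  have "additive (\<lambda>P :: 'a wl. P)"
    by (rule additive.intro) simp
  have "ell l r s (\<phi> P) = ell l r s P \<and> vval l r s (\<phi> P) = vval l r s P"
  proof (rule ell_vval_lower_perturbation[where g = "\<lambda>P. P", OF assms(4,5) \<open>additive (\<lambda>P. P)\<close>
        _ inj_on_id2 _ _ \<open>P \<noteq> 0\<close>])
    fix k :: "int \<times> nat"
    obtain i j where k: "k = (i, j)"
      by (cases k)
    have X: "weights_in l r s {wt l r s (i, 0)} (mon (i, 0) :: 'a wl)"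
      by (simp add: weights_in_single)
    have "\<phi> (mon k) - mon k = mon (i, 0) * ((wpow l Z j - Z ^ j) + (Z ^ j - mon (0, 1) ^ j))"
      unfolding k \<phi>_mon mon_Y_power[symmetric] by (simp add: mult_single right_diff_distrib)
    also have "weights_in l r s {..<wt l r s k} \<dots>"
      unfolding k wt_split[of l r s i j]
      by (rule weights_in_mult[OF X weights_in_add[OF weights_wpow_minus_power[OF Z assms(1,2)]
            weights_in_power_minus_power[OF Y ZY]]]) auto
    finally show "weights_in l r s {..<wt l r s k} (\<phi> (mon k) - mon k)" .
    show "weights_in l r s {wt l r s k} (mon k :: 'a wl)"
      by (simp add: weights_in_single)
  qed simp
  then show ?thesis
    by simp
qed

lemma VV_eq_if_cross_eq:
  assumes V: "(\<rho>, \<sigma>) \<in> VV" and V1: "(\<rho>1, \<sigma>1) \<in> VV" and cross: "\<rho> * \<sigma>1 = \<sigma> * \<rho>1"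
  shows "(\<rho>, \<sigma>) = (\<rho>1, \<sigma>1)"
proof -
  have "coprime \<rho> \<sigma>" "coprime \<rho>1 \<sigma>1"
    using V V1 by (simp_all add: VV_def coprime_iff_gcd_eq_1)
  then have cop: "coprime \<rho> \<sigma>" "coprime \<sigma> \<rho>" "coprime \<rho>1 \<sigma>1" "coprime \<sigma>1 \<rho>1"
    by (simp_all add: coprime_commute)
  have "\<rho> dvd \<sigma> * \<rho>1" "\<sigma> dvd \<rho> * \<sigma>1" "\<rho>1 dvd \<sigma>1 * \<rho>" "\<sigma>1 dvd \<rho>1 * \<sigma>"
    using cross by (metis dvd_triv_left dvd_triv_right mult.commute)+
  then have "\<rho> dvd \<rho>1" "\<sigma> dvd \<sigma>1" "\<rho>1 dvd \<rho>" "\<sigma>1 dvd \<sigma>"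
    using cop by (simp_all add: coprime_dvd_mult_right_iff)
  then have "\<bar>\<rho>1\<bar> = \<bar>\<rho>\<bar>" "\<bar>\<sigma>1\<bar> = \<bar>\<sigma>\<bar>"
    by (blast intro: zdvd_antisym_abs)+
  then have \<rho>_cases: "\<rho>1 = \<rho> \<or> \<rho>1 = - \<rho>" and \<sigma>_cases: "\<sigma>1 = \<sigma> \<or> \<sigma>1 = - \<sigma>"
    by (auto simp: abs_eq_iff)
  have pos: "\<rho> + \<sigma> > 0" "\<rho>1 + \<sigma>1 > 0"
    using V V1 by (simp_all add: VV_def)
  show ?thesis
  proof (cases "\<rho> = 0")
    case True
    then show ?thesis
      using \<rho>_cases \<sigma>_cases pos by auto
  next
    case False
    from \<rho>_cases show ?thesis
    proof
      assume "\<rho>1 = \<rho>"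
      with cross have "\<rho> * \<sigma>1 = \<rho> * \<sigma>"
        by (simp add: mult.commute)
      with False \<open>\<rho>1 = \<rho>\<close> show ?thesis
        by simp
    next
      assume "\<rho>1 = - \<rho>"
      with cross have "\<rho> * \<sigma>1 = \<rho> * (- \<sigma>)"
        by (simp add: mult.commute)
      with False have "\<sigma>1 = - \<sigma>"
        by (simp only: mult_cancel_left) simp
      with \<open>\<rho>1 = - \<rho>\<close> pos show ?thesis
        by simp
    qed
  qed
qed

lemma vless_imp_cross_pos:
  assumes "(\<rho>, \<sigma>) \<in> VV" "(\<rho>1, \<sigma>1) \<in> VV" "vless (\<rho>, \<sigma>) (\<rho>1, \<sigma>1)"
  shows "\<rho> * \<sigma>1 - \<sigma> * \<rho>1 > 0"
proof -
  have "(\<rho>1, \<sigma>1) \<noteq> (-1, 1)"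
    using assms(2) by (auto simp: VV_def)
  then have "\<rho> * \<sigma>1 - \<sigma> * \<rho>1 \<ge> 0" "(\<rho>, \<sigma>) \<noteq> (\<rho>1, \<sigma>1)"
    using assms(3) by (auto simp: vless_def vle_def)
  then show ?thesis
    using VV_eq_if_cross_eq[OF assms(1,2)] by force
qed

lemma wt_X_shift:
  assumes "l > 0" "\<rho> dvd int l"
  shows "wt l r s (\<sigma> * (int l div \<rho>), 0) = of_int r * of_int \<sigma> / of_int \<rho>"
proof -
  obtain d where d: "int l = \<rho> * d"
    using assms(2) by blast
  then have "\<rho> \<noteq> 0" "d \<noteq> 0"
    using assms(1) by auto
  moreover have "(of_nat l :: rat) = of_int \<rho> * of_int d"
    using d by (metis of_int_mult of_int_of_nat_eq)
  ultimately show ?thesis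
    by (simp add: wt_def d)
qed

theorem proposition4p2:
  fixes l :: nat and \<rho> \<sigma> :: int and lam :: "'a::field_char_0"
    and \<phi> :: "'a wl \<Rightarrow> 'a wl" and \<phi>L :: "'a wl \<Rightarrow> 'a wl"
  assumes l: "l > 0"
    and V: "(\<rho>, \<sigma>) \<in> VV" and sig: "\<sigma> \<le> 0" and rdvd: "\<rho> dvd int l"
    and phi_add: "\<And>P Q. \<phi> (P + Q) = \<phi> P + \<phi> Q"
    and phi_scale: "\<And>c P. \<phi> (wscale c P) = wscale c (\<phi> P)"
    and phi_mult: "\<And>P Q. \<phi> (wmult l P Q) = wmult l (\<phi> P) (\<phi> Q)"
    and phi_one: "\<phi> 1 = 1"
    and phi_bij: "bij \<phi>"
    and phi_X: "\<phi> (Poly_Mapping.single (1, 0) 1) = Poly_Mapping.single (1, 0) 1"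
    and phi_Y: "\<phi> (Poly_Mapping.single (0, 1) 1) =
                 Poly_Mapping.single (0, 1) 1 + Poly_Mapping.single (\<sigma> * (int l div \<rho>), 0) lam"
    and phiL_add: "\<And>P Q. \<phi>L (P + Q) = \<phi>L P + \<phi>L Q"
    and phiL_scale: "\<And>c P. \<phi>L (wscale c P) = wscale c (\<phi>L P)"
    and phiL_mult: "\<And>P Q. \<phi>L (P * Q) = \<phi>L P * \<phi>L Q"
    and phiL_one: "\<phi>L 1 = 1"
    and phiL_bij: "bij \<phi>L"
    and phiL_X: "\<phi>L (Poly_Mapping.single (1, 0) 1) = Poly_Mapping.single (1, 0) 1"
    and phiL_Y: "\<phi>L (Poly_Mapping.single (0, 1) 1) =
                 Poly_Mapping.single (0, 1) 1 + Poly_Mapping.single (\<sigma> * (int l div \<rho>), 0) lam"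
  shows "\<forall>P. P \<noteq> 0 \<longrightarrow>
           ell l \<rho> \<sigma> (\<phi> P) = \<phi>L (ell l \<rho> \<sigma> P)
         \<and> vval l \<rho> \<sigma> (\<phi> P) = vval l \<rho> \<sigma> P
         \<and> (\<forall>\<rho>1 \<sigma>1. (\<rho>1, \<sigma>1) \<in> VV \<and> vless (\<rho>, \<sigma>) (\<rho>1, \<sigma>1) \<and> vless (\<rho>1, \<sigma>1) (-1, 1)
               \<longrightarrow> ell l \<rho>1 \<sigma>1 (\<phi> P) = ell l \<rho>1 \<sigma>1 P)"
proof -
  have "\<rho> > 0" "\<rho> + \<sigma> > 0"
    using V sig by (simp_all add: VV_def)
  define Z :: "'a wl" where "Z = mon (0, 1) + Poly_Mapping.single (\<sigma> * (int l div \<rho>), 0) lam"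
  note shift = wt_X_shift[OF l rdvd]
  have \<phi>_mon: "\<phi> (mon (i, j)) = mon (i, 0) * wpow l Z j" for i j
    by (simp only: wmult_hom_image_mon[OF phi_mult phi_one phi_X, of i j] phi_Y Z_def)
  have \<phi>L_mon: "\<phi>L (mon (i, j)) = mon (i, 0) * Z ^ j" for i j
    by (simp only: mult_hom_image_mon[OF phiL_mult phiL_one phiL_X, of i j] phiL_Y Z_def)
  have "additive \<phi>" "additive \<phi>L"
    by (simp_all add: additive_def phi_add phiL_add)
  have "wt l \<rho> \<sigma> (\<sigma> * (int l div \<rho>), 0) = of_int \<sigma>"
    using \<open>\<rho> > 0\<close> by (simp add: shift)
  then have "weights_in l \<rho> \<sigma> {of_int \<sigma>} Z"
    unfolding Z_def by (intro weights_in_add weights_in_single) (simp_all add: wt_def)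
  note leading = ell_vval_wpow_substitution[OF l \<open>\<rho> + \<sigma> > 0\<close> this \<open>additive \<phi>\<close> phi_scale \<phi>_mon
      \<open>additive \<phi>L\<close> phiL_scale bij_is_inj[OF phiL_bij] \<phi>L_mon]
  have between: "ell l \<rho>1 \<sigma>1 (\<phi> P) = ell l \<rho>1 \<sigma>1 P"
    if "P \<noteq> 0" "(\<rho>1, \<sigma>1) \<in> VV" "vless (\<rho>, \<sigma>) (\<rho>1, \<sigma>1)" for P \<rho>1 \<sigma>1
  proof (rule ell_wpow_substitution_lower[OF l _ _ \<open>additive \<phi>\<close> phi_scale \<phi>_mon \<open>P \<noteq> 0\<close>])
    show "\<rho>1 + \<sigma>1 > 0"
      using that(2) by (simp add: VV_def)
    have "\<rho>1 * \<sigma> < \<sigma>1 * \<rho>"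
      using vless_imp_cross_pos[OF V that(2,3)] by (simp add: algebra_simps)
    then have "(of_int \<rho>1 * of_int \<sigma> :: rat) < of_int \<sigma>1 * of_int \<rho>"
      by (metis of_int_less_iff of_int_mult)
    then show "weights_in l \<rho>1 \<sigma>1 {..<of_int \<sigma>1} (Z - mon (0, 1))"
      using \<open>\<rho> > 0\<close> by (simp add: Z_def shift weights_in_single pos_divide_less_eq)
  qed
  show ?thesis
    using leading between by blast
qed

end
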